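(* Let $P\subseteq\mathbb{R}^n$ be a grounded polytope. For every top face $F$ of $P$ put \[ P(F)=\mathrm{Sh}(F)+(h(F)-h(P))\cdot *Z. \] Then $\bigcup_{F\text{ top face of }P}\mathcal{F}(P(F))$ is a partition of $P$. If $P$ is integral (vertices in $\mathbb{Z}^n$), all polytopes in this partition are integral.
   Context: Let $\mathbf{z}=(0,\dots,0,1)$, $Z=\mathrm{hull}\{0,\mathbf{z}\}$, $*Z=\mathrm{hull}\{0,-\mathbf{z}\}$. $h(S)=\min\{x_n:x\in S\}$; $c_t(x_1,\dots,x_n)=(x_1,\dots,x_{n-1},t)$; $\mathrm{Sh}(Q)=\mathrm{hull}(Q\cup c_{h(Q)}(Q))$. A face of a polytope $Q$ is $\{q\in Q:\phi(q)=\max_Q\phi\}$ for linear $\phi$; $\mathcal{F}(Q)$ is the set of faces including $Q$. For an $n$-dimensional polytope, a codimension-1 face $F_\phi(P)$ is a bottom/vertical/top face according as $\phi(\mathbf{z})<0,=0,>0$. An $n$-dimensional polytope is grounded if it has exactly one bottom face and this face lies in a translate of $\mathbf{z}^\perp$. A partition of $P$ is a finite set $\mathcal{Q}$ of polytopes with $\bigcup\mathcal{Q}=P$, closed under taking faces, and such that any two members with nonempty intersection intersect in a common face of both. *)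

theory Defs
  imports "HOL-Analysis.Analysis"
begin

text \<open>Points of R^n are vectors of type real^'n; the distinguished index d plays the
role of the last coordinate x_n (the vertical direction z = e_d).\<close>

definition zvec :: "'n::finite \<Rightarrow> real^'n" where
  "zvec d = axis d 1"

definition starZ :: "'n::finite \<Rightarrow> (real^'n) set" where
  "starZ d = convex hull {0, - zvec d}"

definition hgt :: "'n::finite \<Rightarrow> (real^'n) set \<Rightarrow> real" where
  "hgt d S = Inf ((\<lambda>x. x $ d) ` S)"

definition cproj :: "'n::finite \<Rightarrow> real \<Rightarrow> real^'n \<Rightarrow> real^'n" where
  "cproj d t x = (\<chi> i. if i = d then t else x $ i)"

definition Sh :: "'n::finite \<Rightarrow> (real^'n) set \<Rightarrow> (real^'n) set" where
  "Sh d Q = convex hull (Q \<union> cproj d (hgt d Q) ` Q)"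

definition face_by :: "real^'n \<Rightarrow> (real^'n) set \<Rightarrow> (real^'n) set" where
  "face_by c Q = {q \<in> Q. \<forall>y\<in>Q. c \<bullet> y \<le> c \<bullet> q}"

definition faces :: "(real^'n) set \<Rightarrow> (real^'n) set set" where
  "faces Q = {F. \<exists>c. F = face_by c Q}"

definition top_face :: "'n::finite \<Rightarrow> (real^'n) set \<Rightarrow> (real^'n) set \<Rightarrow> bool" where
  "top_face d P F \<longleftrightarrow> aff_dim F = int CARD('n) - 1 \<and>
     (\<exists>c. F = face_by c P \<and> c \<bullet> zvec d > 0)"

definition bottom_face :: "'n::finite \<Rightarrow> (real^'n) set \<Rightarrow> (real^'n) set \<Rightarrow> bool" where
  "bottom_face d P F \<longleftrightarrow> aff_dim F = int CARD('n) - 1 \<and>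
     (\<exists>c. F = face_by c P \<and> c \<bullet> zvec d < 0)"

definition grounded :: "'n::finite \<Rightarrow> (real^'n) set \<Rightarrow> bool" where
  "grounded d P \<longleftrightarrow> polytope P \<and> aff_dim P = int CARD('n) \<and>
     (\<exists>!B. bottom_face d P B) \<and>
     (\<forall>B. bottom_face d P B \<longrightarrow> (\<exists>t. \<forall>x\<in>B. x $ d = t))"

definition PF :: "'n::finite \<Rightarrow> (real^'n) set \<Rightarrow> (real^'n) set \<Rightarrow> (real^'n) set" where
  "PF d P F = {a + b | a b. a \<in> Sh d F \<and>
                 b \<in> (\<lambda>y. (hgt d F - hgt d P) *\<^sub>R y) ` starZ d}"

definition is_partition :: "(real^'n) set set \<Rightarrow> (real^'n) set \<Rightarrow> bool" where
  "is_partition \<Q> P \<longleftrightarrow> finite \<Q> \<and> (\<forall>Q\<in>\<Q>. polytope Q) \<and> \<Union>\<Q> = P \<and>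
     (\<forall>Q\<in>\<Q>. faces Q \<subseteq> \<Q>) \<and>
     (\<forall>Q1\<in>\<Q>. \<forall>Q2\<in>\<Q>. Q1 \<inter> Q2 \<noteq> {} \<longrightarrow>
        Q1 \<inter> Q2 \<in> faces Q1 \<and> Q1 \<inter> Q2 \<in> faces Q2)"

definition integral_polytope :: "(real^'n) set \<Rightarrow> bool" where
  "integral_polytope Q \<longleftrightarrow> polytope Q \<and>
     (\<forall>v. v extreme_point_of Q \<longrightarrow> (\<forall>i. v $ i \<in> \<int>))"

end

theory Submission
  imports Defs
begin

text \<open>
  P(F) is the column of the points y - t z with y in F and 0 \<le> t \<le> y_d - h(P). Every point of P
  lies in such a column, since the highest point of P on its vertical line lies on a facet with
  upward normal; conversely every column lies in P, because the only facet with downward normal is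
  the horizontal bottom face, at height h(P). If the normals of two top faces F1, F2 are scaled to
  c_i \<bullet> z = 1, the functional c2 - c1 is constant on vertical lines, bounded above on the column of
  F1 by its value on F2 and bounded below on the column of F2 by the same value; hence two columns
  meet in a common face and the faces of all columns form a partition. A column is the convex hull
  of the extreme points of F and their vertical projections to height h(P), which is an integer when
  P is integral.
\<close>

section \<open>Faces cut out by linear functionals\<close>

lemma face_by_eq_Int_hyperplane:
  assumes "q \<in> face_by c Q"
  shows "Q \<subseteq> {x. c \<bullet> x \<le> c \<bullet> q}" "face_by c Q = Q \<inter> {x. c \<bullet> x = c \<bullet> q}"
  using assms by (auto simp: face_by_def) (metis order.eq_iff)+

lemma face_by_supporting_hyperplane:
  assumes "Q \<subseteq> {x. a \<bullet> x \<le> b}" "Q \<inter> {x. a \<bullet> x = b} \<noteq> {}"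
  shows "face_by a Q = Q \<inter> {x. a \<bullet> x = b}"
  using assms unfolding face_by_def by fastforce

lemma face_by_nonempty:
  assumes "compact Q" "Q \<noteq> {}" shows "face_by c Q \<noteq> {}"
proof -
  have "continuous_on Q (\<lambda>x. c \<bullet> x)"
    by (intro continuous_intros)
  then obtain q where "q \<in> Q" "\<forall>y\<in>Q. c \<bullet> y \<le> c \<bullet> q"
    using continuous_attains_sup[OF assms] by blast
  then show ?thesis by (auto simp: face_by_def)
qed

lemma face_by_face_of:
  assumes "convex Q" shows "face_by c Q face_of Q"
proof (cases "face_by c Q = {}")
  case False
  then obtain q where "q \<in> face_by c Q" by blast
  from face_by_eq_Int_hyperplane[OF this] show ?thesis
    using face_of_Int_supporting_hyperplane_le[OF assms] by (metis mem_Collect_eq subsetD)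
qed simp

lemma faces_polytope:
  assumes "polytope Q" "Q \<noteq> {}"
  shows "faces Q = {T. T face_of Q \<and> T \<noteq> {}}"
proof (intro equalityI subsetI)
  fix T assume "T \<in> faces Q"
  then obtain c where "T = face_by c Q"
    by (auto simp: faces_def)
  then show "T \<in> {T. T face_of Q \<and> T \<noteq> {}}"
    using face_by_nonempty[OF polytope_imp_compact[OF assms(1)] assms(2)]
      face_by_face_of[OF polytope_imp_convex[OF assms(1)]] by blast
next
  fix T assume T: "T \<in> {T. T face_of Q \<and> T \<noteq> {}}"
  then have "T exposed_face_of Q"
    using exposed_face_of_polyhedron[OF polytope_imp_polyhedron[OF assms(1)]] by blast
  then obtain a b where "Q \<subseteq> {x. a \<bullet> x \<le> b}" "T = Q \<inter> {x. a \<bullet> x = b}"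
    by (auto simp: exposed_face_of_def)
  then have "T = face_by a Q"
    using T face_by_supporting_hyperplane by blast
  then show "T \<in> faces Q"
    by (auto simp: faces_def)
qed

lemma self_in_faces: "Q \<in> faces Q"
  unfolding faces_def face_by_def by (rule CollectI, rule exI[of _ 0]) simp

lemma is_partition_Union_faces:
  assumes "finite \<C>" and cells: "\<And>C. C \<in> \<C> \<Longrightarrow> polytope C \<and> C \<noteq> {}" and "\<Union>\<C> = P"
    and cells_Int: "\<And>C D. C \<in> \<C> \<Longrightarrow> D \<in> \<C> \<Longrightarrow> C \<inter> D face_of C"
  shows "is_partition (\<Union>C\<in>\<C>. faces C) P"
proof -
  have faces_cell: "faces C = {T. T face_of C \<and> T \<noteq> {}}" if "C \<in> \<C>" for C
    using faces_polytope cells that by blast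
  have face_cell: "Q face_of C" "Q \<noteq> {}" "polytope Q" if "C \<in> \<C>" "Q \<in> faces C" for Q C
  proof -
    show "Q face_of C" "Q \<noteq> {}"
      using faces_cell that by auto
    then show "polytope Q"
      using face_of_polytope_polytope cells that(1) by blast
  qed
  have faces_face: "faces Q \<subseteq> faces C" if "C \<in> \<C>" "Q \<in> faces C" for Q C
  proof
    fix G assume "G \<in> faces Q"
    then have "G face_of Q" "G \<noteq> {}"
      using faces_polytope[OF face_cell(3,2)[OF that]] by auto
    then show "G \<in> faces C"
      using face_of_trans[OF _ face_cell(1)[OF that]] faces_cell[OF that(1)] by blast
  qed
  show ?thesis
    unfolding is_partition_def
  proof (intro conjI ballI impI)
    have "finite (faces C)" if "C \<in> \<C>" for C
      using finite_polytope_faces[of C] cells[OF that] faces_cell[OF that]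
      by (auto intro: finite_subset[of _ "{T. T face_of C}"])
    then show "finite (\<Union>C\<in>\<C>. faces C)"
      using assms(1) by blast
  next
    show "polytope Q" if "Q \<in> (\<Union>C\<in>\<C>. faces C)" for Q
      using face_cell(3) that by blast
  next
    have "Q \<subseteq> P" if "C \<in> \<C>" "Q \<in> faces C" for Q C
      using face_of_imp_subset[OF face_cell(1)[OF that]] that(1) assms(3) by blast
    then show "\<Union>(\<Union>C\<in>\<C>. faces C) = P"
      using self_in_faces assms(3) by blast
  next
    show "faces Q \<subseteq> (\<Union>C\<in>\<C>. faces C)" if "Q \<in> (\<Union>C\<in>\<C>. faces C)" for Q
      using faces_face that by blast
  next
    fix Q1 Q2 assume "Q1 \<in> (\<Union>C\<in>\<C>. faces C)" "Q2 \<in> (\<Union>C\<in>\<C>. faces C)" and ne: "Q1 \<inter> Q2 \<noteq> {}"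
    then obtain C1 C2 where C1: "C1 \<in> \<C>" "Q1 \<in> faces C1" and C2: "C2 \<in> \<C>" "Q2 \<in> faces C2"
      by blast
    have "C1 \<inter> C2 face_of C2"
      using cells_Int[OF C2(1) C1(1)] by (simp add: Int_commute)
    then have "Q1 \<inter> Q2 face_of Q1 \<and> Q1 \<inter> Q2 face_of Q2"
      using face_of_Int_subface cells_Int[OF C1(1) C2(1)] face_cell(1)[OF C1] face_cell(1)[OF C2] by blast
    then show "Q1 \<inter> Q2 \<in> faces Q1" "Q1 \<inter> Q2 \<in> faces Q2"
      using ne faces_polytope face_cell(2,3)[OF C1] face_cell(2,3)[OF C2] by blast+
  qed
qed

lemma integral_polytope_face_of:
  assumes "integral_polytope Q" "T face_of Q" shows "integral_polytope T"
  using assms face_of_polytope_polytope extreme_point_of_face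
  unfolding integral_polytope_def by blast

section \<open>Heights and vertical columns\<close>

lemma zvec_inner [simp]: "zvec d \<bullet> x = x $ d"
  by (simp add: zvec_def inner_axis')

lemma zvec_nth [simp]: "zvec d $ i = (if i = d then 1 else 0)"
  by (simp add: zvec_def axis_def)

lemma cproj_eq: "cproj d t x = x - (x $ d - t) *\<^sub>R zvec d"
  by (simp add: cproj_def vec_eq_iff)

lemma hgt_le:
  assumes "compact S" "y \<in> S" shows "hgt d S \<le> y $ d"
proof -
  have "compact ((\<lambda>x. x $ d) ` S)"
    by (rule compact_continuous_image[OF _ assms(1)]) (intro continuous_intros)
  then show ?thesis
    using assms(2) by (auto simp: hgt_def bounded_imp_bdd_below compact_imp_bounded intro: cInf_lower)
qed

lemma hgt_greatest:
  assumes "S \<noteq> {}" "\<And>y. y \<in> S \<Longrightarrow> t \<le> y $ d" shows "t \<le> hgt d S"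
  unfolding hgt_def using assms by (intro cInf_greatest) auto

lemma hgt_integral:
  assumes "integral_polytope P" "P \<noteq> {}" shows "hgt d P \<in> \<int>"
proof -
  let ?B = "face_by (- zvec d) P"
  have P: "compact P" "convex P"
    using assms(1) polytope_imp_compact polytope_imp_convex by (auto simp: integral_polytope_def)
  have B: "?B face_of P" "?B \<noteq> {}"
    using face_by_face_of face_by_nonempty P assms(2) by auto
  then obtain q where "q extreme_point_of ?B"
    using extreme_point_exists_convex face_of_imp_compact face_of_imp_convex P by metis
  then have q: "q extreme_point_of P" "q \<in> ?B"
    using extreme_point_of_face[OF B(1)] by auto
  then have "hgt d P = q $ d"
    unfolding hgt_def by (intro cInf_eq_minimum) (auto simp: face_by_def)
  then show ?thesis
    using q(1) assms(1) by (simp add: integral_polytope_def)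
qed

definition column :: "'n::finite \<Rightarrow> real \<Rightarrow> (real^'n) set \<Rightarrow> (real^'n) set" where
  "column d h F = {y - t *\<^sub>R zvec d | y t. y \<in> F \<and> 0 \<le> t \<and> t \<le> y $ d - h}"

lemma subset_column:
  assumes "\<And>y. y \<in> F \<Longrightarrow> h \<le> y $ d" shows "F \<subseteq> column d h F"
proof
  fix y assume "y \<in> F"
  then show "y \<in> column d h F"
    using assms unfolding column_def by (intro CollectI exI[of _ y] exI[of _ 0]) auto
qed

lemma cproj_in_column:
  assumes "y \<in> F" "h \<le> y $ d" shows "cproj d h y \<in> column d h F"
  using assms unfolding column_def cproj_eq by (intro CollectI exI[of _ y] exI[of _ "y $ d - h"]) auto

lemma convex_column:
  assumes "convex F" shows "convex (column d h F)"
proof (rule convexI)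
  fix p q and u v :: real
  assume "p \<in> column d h F" "q \<in> column d h F" and uv: "0 \<le> u" "0 \<le> v" "u + v = 1"
  then obtain y1 t1 y2 t2 where
    p: "p = y1 - t1 *\<^sub>R zvec d" "y1 \<in> F" "0 \<le> t1" "t1 \<le> y1 $ d - h" and
    q: "q = y2 - t2 *\<^sub>R zvec d" "y2 \<in> F" "0 \<le> t2" "t2 \<le> y2 $ d - h"
    by (auto simp: column_def)
  have y: "u *\<^sub>R y1 + v *\<^sub>R y2 \<in> F"
    using assms p(2) q(2) uv by (simp add: convex_def)
  have eq: "u *\<^sub>R p + v *\<^sub>R q = (u *\<^sub>R y1 + v *\<^sub>R y2) - (u * t1 + v * t2) *\<^sub>R zvec d"
    unfolding p(1) q(1) by (simp add: algebra_simps)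
  have "u * t1 \<le> u * (y1 $ d - h)" "v * t2 \<le> v * (y2 $ d - h)"
    using p q uv by (auto intro: mult_left_mono)
  moreover have "(u *\<^sub>R y1 + v *\<^sub>R y2) $ d - h = u * (y1 $ d - h) + v * (y2 $ d - h) + (u + v - 1) * h"
    by (simp add: algebra_simps)
  ultimately have "u * t1 + v * t2 \<le> (u *\<^sub>R y1 + v *\<^sub>R y2) $ d - h"
    using uv(3) by simp
  moreover have "0 \<le> u * t1 + v * t2"
    using p q uv by simp
  ultimately show "u *\<^sub>R p + v *\<^sub>R q \<in> column d h F"
    unfolding column_def eq using y by blast
qed

lemma vertical_point_in_closed_segment:
  assumes "0 \<le> t" "t \<le> y $ d - h"
  shows "y - t *\<^sub>R zvec d \<in> closed_segment y (cproj d h y)"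
proof (cases "y $ d = h")
  case True
  then show ?thesis using assms by simp
next
  case False
  define u where "u = t / (y $ d - h)"
  have "y $ d - h > 0"
    using False assms by simp
  then have "0 \<le> u" "u \<le> 1" "u * (y $ d - h) = t"
    using assms by (auto simp: u_def)
  moreover have "(1 - u) *\<^sub>R y + u *\<^sub>R cproj d h y = y - (u * (y $ d - h)) *\<^sub>R zvec d"
    by (simp add: cproj_eq algebra_simps)
  ultimately show ?thesis
    unfolding in_segment by metis
qed

lemma cproj_convex_hull: "cproj d h ` (convex hull V) = convex hull (cproj d h ` V)"
proof -
  define L where "L = (\<lambda>x. x - (x $ d) *\<^sub>R zvec d)"
  have lin: "linear L"
    unfolding L_def by (rule linearI) (simp_all add: algebra_simps)
  have img: "cproj d h ` S = (\<lambda>x. h *\<^sub>R zvec d + x) ` L ` S" for S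
    by (simp add: image_image L_def cproj_eq algebra_simps)
  show ?thesis
    unfolding img convex_hull_linear_image[OF lin, symmetric] convex_hull_translation ..
qed

lemma column_convex_hull:
  assumes "\<And>y. y \<in> convex hull V \<Longrightarrow> h \<le> y $ d"
  shows "column d h (convex hull V) = convex hull (V \<union> cproj d h ` V)"
proof
  have "V \<union> cproj d h ` V \<subseteq> column d h (convex hull V)"
    using assms subset_column[of "convex hull V" h d] cproj_in_column[of _ "convex hull V" h d]
      hull_subset[of V convex] by blast
  then show "convex hull (V \<union> cproj d h ` V) \<subseteq> column d h (convex hull V)"
    by (intro hull_minimal convex_column convex_convex_hull)
  show "column d h (convex hull V) \<subseteq> convex hull (V \<union> cproj d h ` V)"
  proof
    fix p assume "p \<in> column d h (convex hull V)"
    then obtain y t where p: "p = y - t *\<^sub>R zvec d" "y \<in> convex hull V" "0 \<le> t" "t \<le> y $ d - h"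
      by (auto simp: column_def)
    have "y \<in> convex hull (V \<union> cproj d h ` V)"
      using p(2) hull_mono[of V "V \<union> cproj d h ` V"] by blast
    moreover have "cproj d h y \<in> convex hull (V \<union> cproj d h ` V)"
      using p(2) cproj_convex_hull hull_mono[of "cproj d h ` V" "V \<union> cproj d h ` V"] by blast
    ultimately show "p \<in> convex hull (V \<union> cproj d h ` V)"
      using closed_segment_subset[OF _ _ convex_convex_hull] vertical_point_in_closed_segment[OF p(3,4)] p(1)
      by blast
  qed
qed

lemma polytope_column:
  assumes "polytope F" "\<And>y. y \<in> F \<Longrightarrow> h \<le> y $ d" shows "polytope (column d h F)"
proof -
  obtain V where V: "finite V" "F = convex hull V"
    using assms(1) by (auto simp: polytope_def)
  then have "column d h F = convex hull (V \<union> cproj d h ` V)"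
    using column_convex_hull assms(2) by blast
  moreover have "finite (V \<union> cproj d h ` V)"
    using V(1) by simp
  ultimately show ?thesis
    unfolding polytope_def by blast
qed

lemma extreme_point_of_column:
  assumes "compact F" "convex F" "\<And>y. y \<in> F \<Longrightarrow> h \<le> y $ d" "v extreme_point_of column d h F"
  obtains e where "e extreme_point_of F" "v = e \<or> v = cproj d h e"
proof -
  let ?E = "{x. x extreme_point_of F}"
  have "F = convex hull ?E"
    using Krein_Milman_Minkowski assms(1,2) by blast
  then have "column d h F = convex hull (?E \<union> cproj d h ` ?E)"
    using column_convex_hull[of ?E h d] assms(3) by simp
  then have "v \<in> ?E \<union> cproj d h ` ?E"
    using extreme_point_of_convex_hull assms(4) by metis
  then show thesis
    using that by blast
qed

lemma integral_polytope_column: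
  assumes "integral_polytope P" "F face_of P" "h \<in> \<int>" "\<And>y. y \<in> F \<Longrightarrow> h \<le> y $ d"
  shows "integral_polytope (column d h F)"
proof -
  have "polytope F"
    using assms(1,2) face_of_polytope_polytope by (auto simp: integral_polytope_def)
  moreover have "v $ i \<in> \<int>" if v: "v extreme_point_of column d h F" for v i
  proof -
    obtain e where "e extreme_point_of F" "v = e \<or> v = cproj d h e"
      using extreme_point_of_column[OF _ _ assms(4) v] \<open>polytope F\<close> polytope_imp_compact polytope_imp_convex
      by metis
    moreover have "\<forall>j. e $ j \<in> \<int>" if "e extreme_point_of F" for e
      using that assms(1) extreme_point_of_face[OF assms(2)] by (auto simp: integral_polytope_def)
    ultimately show ?thesis
      using assms(3) by (auto simp: cproj_def)
  qed
  ultimately show ?thesis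
    using polytope_column[OF _ assms(4)] by (auto simp: integral_polytope_def)
qed

lemma Sh_eq_column:
  assumes "convex F" "compact F" shows "Sh d F = column d (hgt d F) F"
proof -
  have hull_F: "convex hull F = F"
    using assms(1) by (rule hull_same)
  have "column d (hgt d F) (convex hull F) = convex hull (F \<union> cproj d (hgt d F) ` F)"
    by (rule column_convex_hull) (use hgt_le[OF assms(2)] hull_F in auto)
  then show ?thesis
    by (simp add: Sh_def hull_F)
qed

lemma scaleR_image_starZ:
  assumes "0 \<le> r" shows "(\<lambda>y. r *\<^sub>R y) ` starZ d = (\<lambda>s. - (s *\<^sub>R zvec d)) ` {0..r}"
proof -
  have lin: "linear (\<lambda>y::real^'n. r *\<^sub>R y)" "linear (\<lambda>s. - (s *\<^sub>R zvec d))"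
    by (rule linearI; simp add: algebra_simps)+
  have "(\<lambda>y. r *\<^sub>R y) ` starZ d = closed_segment 0 (- (r *\<^sub>R zvec d))"
    using closed_segment_linear_image[OF lin(1), of 0 "- zvec d"]
    by (simp add: starZ_def segment_convex_hull)
  also have "\<dots> = (\<lambda>s. - (s *\<^sub>R zvec d)) ` closed_segment 0 r"
    using closed_segment_linear_image[OF lin(2), of 0 r] by simp
  finally show ?thesis
    using assms by (simp add: closed_segment_eq_real_ivl)
qed

lemma column_plus_vertical_segment:
  assumes "h' \<le> h" "\<And>y. y \<in> F \<Longrightarrow> h \<le> y $ d"
  shows "{a + b | a b. a \<in> column d h F \<and> b \<in> (\<lambda>s. - (s *\<^sub>R zvec d)) ` {0..h - h'}} = column d h' F"
proof (intro equalityI subsetI)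
  fix p assume "p \<in> {a + b | a b. a \<in> column d h F \<and> b \<in> (\<lambda>s. - (s *\<^sub>R zvec d)) ` {0..h - h'}}"
  then obtain y t s where "p = y - (t + s) *\<^sub>R zvec d" "y \<in> F" "0 \<le> t" "t \<le> y $ d - h"
    "0 \<le> s" "s \<le> h - h'"
    by (auto simp: column_def algebra_simps)
  then show "p \<in> column d h' F"
    unfolding column_def by (intro CollectI exI[of _ y] exI[of _ "t + s"]) auto
next
  fix p assume "p \<in> column d h' F"
  then obtain y t where p: "p = y - t *\<^sub>R zvec d" "y \<in> F" "0 \<le> t" "t \<le> y $ d - h'"
    by (auto simp: column_def)
  define s where "s = max 0 (t - (y $ d - h))"
  have "y - (t - s) *\<^sub>R zvec d \<in> column d h F"
    unfolding column_def
    by (intro CollectI exI[of _ y] exI[of _ "t - s"]) (use p assms(2)[OF p(2)] in \<open>auto simp: s_def\<close>)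
  moreover have "- (s *\<^sub>R zvec d) \<in> (\<lambda>s. - (s *\<^sub>R zvec d)) ` {0..h - h'}"
    using p assms unfolding s_def by auto
  moreover have "p = (y - (t - s) *\<^sub>R zvec d) + - (s *\<^sub>R zvec d)"
    using p(1) by (simp add: algebra_simps)
  ultimately show "p \<in> {a + b | a b. a \<in> column d h F \<and> b \<in> (\<lambda>s. - (s *\<^sub>R zvec d)) ` {0..h - h'}}"
    by blast
qed

lemma PF_eq_column:
  assumes "convex F" "compact F" "hgt d P \<le> hgt d F"
  shows "PF d P F = column d (hgt d P) F"
  using column_plus_vertical_segment[OF assms(3), of F d] hgt_le[OF assms(2)]
  by (simp add: PF_def Sh_eq_column[OF assms(1,2)] scaleR_image_starZ assms(3))

lemma column_Int_column_face_of:
  assumes "convex P"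
    and F1: "P \<subseteq> {x. c1 \<bullet> x \<le> \<beta>1}" "F1 = P \<inter> {x. c1 \<bullet> x = \<beta>1}" "c1 \<bullet> zvec d = 1"
    and F2: "P \<subseteq> {x. c2 \<bullet> x \<le> \<beta>2}" "F2 = P \<inter> {x. c2 \<bullet> x = \<beta>2}" "c2 \<bullet> zvec d = 1"
  shows "column d h F1 \<inter> column d h F2 face_of column d h F1"
proof -
  define w where "w = c2 - c1"
  have w_vertical: "w \<bullet> (y - t *\<^sub>R zvec d) = w \<bullet> y" for y t
    using F1(3) F2(3) by (simp add: w_def inner_diff_left inner_diff_right)
  have le: "w \<bullet> p \<le> \<beta>2 - \<beta>1" if "p \<in> column d h F1" for p
    using that F1(2) F2(1) by (auto simp: column_def w_vertical) (auto simp: w_def inner_diff_left)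
  have ge: "\<beta>2 - \<beta>1 \<le> w \<bullet> p" if "p \<in> column d h F2" for p
    using that F1(1) F2(2) by (auto simp: column_def w_vertical) (auto simp: w_def inner_diff_left)
  have "column d h F1 \<inter> column d h F2 = column d h F1 \<inter> {x. w \<bullet> x = \<beta>2 - \<beta>1}"
  proof (intro equalityI subsetI)
    fix p assume "p \<in> column d h F1 \<inter> column d h F2"
    then show "p \<in> column d h F1 \<inter> {x. w \<bullet> x = \<beta>2 - \<beta>1}"
      using le ge by force
  next
    fix p assume p: "p \<in> column d h F1 \<inter> {x. w \<bullet> x = \<beta>2 - \<beta>1}"
    then obtain y t where y: "p = y - t *\<^sub>R zvec d" "y \<in> F1" "0 \<le> t" "t \<le> y $ d - h"
      by (auto simp: column_def)
    then have "w \<bullet> y = \<beta>2 - \<beta>1"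
      using p w_vertical by simp
    then have "c2 \<bullet> y = \<beta>2"
      using y(2) F1(2) by (simp add: w_def inner_diff_left)
    then have "y \<in> F2"
      using y(2) F1(2) F2(2) by blast
    then show "p \<in> column d h F1 \<inter> column d h F2"
      using p y unfolding column_def by blast
  qed
  moreover have "convex F1"
    using assms(1) F1(2) by (simp add: convex_Int convex_hyperplane)
  ultimately show ?thesis
    using face_of_Int_supporting_hyperplane_le[OF convex_column] le by metis
qed

section \<open>Top faces and grounded polytopes\<close>

lemma top_face_nonempty: "top_face d P F \<Longrightarrow> F \<noteq> {}"
  by (auto simp: top_face_def)

lemma top_face_face_of: "convex P \<Longrightarrow> top_face d P F \<Longrightarrow> F face_of P"
  by (auto simp: top_face_def face_by_face_of)

lemma top_face_supporting_hyperplane: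
  assumes "top_face d P F"
  obtains c \<beta> where "c \<bullet> zvec d = 1" "P \<subseteq> {x. c \<bullet> x \<le> \<beta>}" "F = P \<inter> {x. c \<bullet> x = \<beta>}"
proof -
  obtain c where c: "F = face_by c P" "c \<bullet> zvec d > 0"
    using assms by (auto simp: top_face_def)
  obtain q where "q \<in> face_by c P"
    using top_face_nonempty[OF assms] c(1) by blast
  from face_by_eq_Int_hyperplane[OF this]
  have hyp: "P \<subseteq> {x. c \<bullet> x \<le> c \<bullet> q}" "F = P \<inter> {x. c \<bullet> x = c \<bullet> q}"
    using c(1) by simp_all
  define c' where "c' = c /\<^sub>R (c \<bullet> zvec d)"
  have scale: "c' \<bullet> x = (c \<bullet> x) / (c \<bullet> zvec d)" for x
    by (simp add: c'_def divide_inverse_commute)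
  show thesis
  proof (rule that[of c' "c' \<bullet> q"])
    show "c' \<bullet> zvec d = 1"
      using c(2) by (simp only: scale) simp
    show "P \<subseteq> {x. c' \<bullet> x \<le> c' \<bullet> q}"
      using hyp(1) c(2) by (auto simp only: scale intro: divide_right_mono)
    show "F = P \<inter> {x. c' \<bullet> x = c' \<bullet> q}"
      using hyp(2) c(2) by (simp add: scale)
  qed
qed

lemma top_face_column_Int_face_of:
  assumes "convex P" "top_face d P F1" "top_face d P F2"
  shows "column d h F1 \<inter> column d h F2 face_of column d h F1"
proof -
  obtain c1 \<beta>1
    where "c1 \<bullet> zvec d = 1" "P \<subseteq> {x. c1 \<bullet> x \<le> \<beta>1}" "F1 = P \<inter> {x. c1 \<bullet> x = \<beta>1}"
    using top_face_supporting_hyperplane[OF assms(2)] by blast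
  moreover obtain c2 \<beta>2
    where "c2 \<bullet> zvec d = 1" "P \<subseteq> {x. c2 \<bullet> x \<le> \<beta>2}" "F2 = P \<inter> {x. c2 \<bullet> x = \<beta>2}"
    using top_face_supporting_hyperplane[OF assms(3)] by blast
  ultimately show ?thesis
    using column_Int_column_face_of[OF assms(1)] by blast
qed

lemma full_dim_polyhedron_facet_halfspaces:
  fixes P :: "'a::euclidean_space set"
  assumes "polyhedron P" "aff_dim P = DIM('a)"
  obtains H :: "'a set set" and a b where "finite H" "P = {x. \<forall>h\<in>H. a h \<bullet> x \<le> b h}"
    "\<forall>h\<in>H. P \<inter> {x. a h \<bullet> x = b h} facet_of P"
proof -
  obtain H where H: "finite H" "P = affine hull P \<inter> \<Inter>H"
    "\<forall>h\<in>H. \<exists>a b. a \<noteq> 0 \<and> h = {x. a \<bullet> x \<le> b}"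
    "\<And>H'. H' \<subset> H \<Longrightarrow> P \<subset> affine hull P \<inter> \<Inter>H'"
    using iffD1[OF polyhedron_Int_affine_minimal assms(1)] by (elim exE conjE) blast
  obtain a where a: "\<forall>h\<in>H. \<exists>b. a h \<noteq> 0 \<and> h = {x. a h \<bullet> x \<le> b}"
    using bchoice[OF H(3)] by auto
  obtain b where "\<forall>h\<in>H. a h \<noteq> 0 \<and> h = {x. a h \<bullet> x \<le> b h}"
    using bchoice[OF a] by blast
  then have ab: "\<And>h. h \<in> H \<Longrightarrow> a h \<noteq> 0 \<and> h = {x. a h \<bullet> x \<le> b h}"
    by blast
  have "affine hull P = UNIV"
    using assms(2) by (rule affine_hull_UNIV)
  with H(2) have "P = \<Inter>H"
    by (metis inf_top_left)
  also have "\<dots> = {x. \<forall>h\<in>H. a h \<bullet> x \<le> b h}"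
  proof (rule set_eqI)
    show "x \<in> \<Inter>H \<longleftrightarrow> x \<in> {x. \<forall>h\<in>H. a h \<bullet> x \<le> b h}" for x
      using ab by auto
  qed
  finally have "P = {x. \<forall>h\<in>H. a h \<bullet> x \<le> b h}" .
  moreover have "\<forall>h\<in>H. P \<inter> {x. a h \<bullet> x = b h} facet_of P"
    using facet_of_polyhedron_explicit[OF H(1,2) ab H(4)] by auto
  ultimately show thesis
    by (rule that[OF H(1)])
qed

lemma halfspaces_feasible_direction:
  assumes "finite H" "\<forall>h\<in>H. a h \<bullet> x \<le> b h"
    and "\<And>h. h \<in> H \<Longrightarrow> a h \<bullet> x = b h \<Longrightarrow> a h \<bullet> v \<le> 0"
  obtains e where "e > 0" "\<forall>h\<in>H. a h \<bullet> (x + e *\<^sub>R v) \<le> b h"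
proof -
  let ?H = "{h \<in> H. a h \<bullet> v > 0}"
  define e where "e = Min (insert 1 ((\<lambda>h. (b h - a h \<bullet> x) / (a h \<bullet> v)) ` ?H))"
  have slack: "a h \<bullet> x < b h" if "h \<in> ?H" for h
    using assms(2,3) that by force
  have "e > 0"
    unfolding e_def using assms(1) slack by (subst Min_gr_iff) auto
  moreover have "a h \<bullet> (x + e *\<^sub>R v) \<le> b h" if "h \<in> H" for h
  proof (cases "h \<in> ?H")
    case True
    then have "e \<le> (b h - a h \<bullet> x) / (a h \<bullet> v)"
      unfolding e_def using assms(1) by (intro Min_le) auto
    then show ?thesis
      using True by (simp add: inner_add_right pos_le_divide_eq algebra_simps)
  next
    case False
    then have "e * (a h \<bullet> v) \<le> 0"
      using that \<open>e > 0\<close> by (simp add: mult_nonneg_nonpos)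
    moreover have "a h \<bullet> x \<le> b h"
      using that assms(2) by blast
    ultimately show ?thesis
      by (simp add: inner_add_right)
  qed
  ultimately show thesis
    using that by blast
qed

lemma facet_eq_face_by:
  assumes "P \<subseteq> {x. a \<bullet> x \<le> b}" "P \<inter> {x. a \<bullet> x = b} facet_of P"
  shows "P \<inter> {x. a \<bullet> x = b} = face_by a P" "aff_dim (P \<inter> {x. a \<bullet> x = b}) = aff_dim P - 1"
proof -
  have "P \<inter> {x. a \<bullet> x = b} \<noteq> {}"
    using assms(2) by (simp add: facet_of_def)
  then show "P \<inter> {x. a \<bullet> x = b} = face_by a P"
    using face_by_supporting_hyperplane[OF assms(1)] by simp
  show "aff_dim (P \<inter> {x. a \<bullet> x = b}) = aff_dim P - 1"
    using assms(2) by (simp add: facet_of_def)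
qed

lemma hyperplane_eq_horizontal:
  fixes a :: "real^'n"
  assumes "C \<subseteq> {x. a \<bullet> x = b}" "aff_dim C = int CARD('n) - 1" "\<forall>x\<in>C. x $ d = t"
    and "a \<bullet> zvec d \<noteq> 0"
  shows "a \<bullet> x - b = (a \<bullet> zvec d) * (x $ d - t)"
proof -
  have "C \<noteq> {}"
    using assms(2) by (auto simp: Suc_le_eq)
  have "a \<noteq> 0"
    using assms(4) by auto
  have hyperplane: "affine hull C = {x. a \<bullet> x = b}"
  proof (rule affine_dim_equal)
    show "affine hull C \<subseteq> {x. a \<bullet> x = b}"
      using assms(1) by (intro hull_minimal affine_hyperplane)
    show "aff_dim (affine hull C) = aff_dim {x. a \<bullet> x = b}"
      using assms(2) \<open>a \<noteq> 0\<close> by (simp add: aff_dim_hyperplane)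
  qed (use \<open>C \<noteq> {}\<close> affine_hyperplane in auto)
  have horizontal: "affine hull C \<subseteq> {x. zvec d \<bullet> x = t}"
    using assms(3) by (intro hull_minimal affine_hyperplane) auto
  define x' where "x' = x - ((a \<bullet> x - b) / (a \<bullet> zvec d)) *\<^sub>R zvec d"
  have "a \<bullet> x' = b"
    using assms(4) by (simp add: x'_def inner_diff_right)
  then have "x' $ d = t"
    using hyperplane horizontal by auto
  then show ?thesis
    using assms(4) by (simp add: x'_def field_simps)
qed

lemma grounded_facet_halfspace_below:
  fixes P :: "(real^'n) set"
  assumes "grounded d P" "P \<subseteq> {x. a \<bullet> x \<le> b}" "P \<inter> {x. a \<bullet> x = b} facet_of P"
    and "a \<bullet> zvec d < 0" "hgt d P \<le> y $ d"
  shows "a \<bullet> y \<le> b"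
proof -
  let ?B = "P \<inter> {x. a \<bullet> x = b}"
  have dim: "aff_dim ?B = int CARD('n) - 1"
    using facet_eq_face_by(2)[OF assms(2,3)] assms(1) by (simp add: grounded_def)
  then have "bottom_face d P ?B"
    using facet_eq_face_by(1)[OF assms(2,3)] assms(4) by (auto simp: bottom_face_def)
  moreover have "\<forall>B. bottom_face d P B \<longrightarrow> (\<exists>t. \<forall>x\<in>B. x $ d = t)"
    using assms(1) by (simp add: grounded_def)
  ultimately obtain t where t: "\<forall>x\<in>?B. x $ d = t"
    by blast
  have level: "a \<bullet> x - b = (a \<bullet> zvec d) * (x $ d - t)" for x
    by (rule hyperplane_eq_horizontal[OF _ dim t assms(4)[THEN less_imp_neq]]) auto
  have "t \<le> hgt d P"
  proof (rule hgt_greatest)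
    show "P \<noteq> {}"
      using assms(3) by (auto simp: facet_of_def)
    fix p assume "p \<in> P"
    then have "(a \<bullet> zvec d) * (p $ d - t) \<le> 0"
      using assms(2) level[of p] by auto
    then show "t \<le> p $ d"
      using assms(4) by (simp add: mult_le_0_iff)
  qed
  then have "(a \<bullet> zvec d) * (y $ d - t) \<le> 0"
    using assms(4,5) by (simp add: mult_nonpos_nonneg)
  then show ?thesis
    using level[of y] by simp
qed

lemma grounded_column_subset:
  fixes P :: "(real^'n) set"
  assumes "grounded d P" "F \<subseteq> P" shows "column d (hgt d P) F \<subseteq> P"
proof
  fix p assume "p \<in> column d (hgt d P) F"
  then obtain y t where p: "p = y - t *\<^sub>R zvec d" "y \<in> P" "0 \<le> t" "t \<le> y $ d - hgt d P"
    using assms(2) by (auto simp: column_def)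
  have "polyhedron P" "aff_dim P = DIM(real^'n)"
    using assms(1) by (simp_all add: grounded_def polytope_imp_polyhedron)
  then obtain H :: "(real^'n) set set" and a b where H: "finite H" "P = {x. \<forall>h\<in>H. a h \<bullet> x \<le> b h}"
    "\<forall>h\<in>H. P \<inter> {x. a h \<bullet> x = b h} facet_of P"
    by (rule full_dim_polyhedron_facet_halfspaces)
  have "a h \<bullet> p \<le> b h" if "h \<in> H" for h
  proof (cases "a h \<bullet> zvec d < 0")
    case True
    show ?thesis
      by (rule grounded_facet_halfspace_below[OF assms(1) _ H(3)[rule_format, OF that] True])
        (use H(2) that p in auto)
  next
    case False
    have "a h \<bullet> y \<le> b h"
      using H(2) that p(2) by blast
    moreover have "0 \<le> t * (a h \<bullet> zvec d)"
      using False p(3) by simp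
    ultimately show ?thesis
      using p(1) by (simp add: inner_diff_right)
  qed
  then show "p \<in> P"
    using H(2) by blast
qed

lemma polytope_below_top_face:
  fixes P :: "(real^'n) set"
  assumes "polytope P" "aff_dim P = int CARD('n)" "x \<in> P"
  obtains F y t where "top_face d P F" "y \<in> F" "0 \<le> t" "x = y - t *\<^sub>R zvec d"
proof -
  have "polyhedron P" "aff_dim P = DIM(real^'n)"
    using assms(1,2) by (simp_all add: polytope_imp_polyhedron)
  then obtain H :: "(real^'n) set set" and a b where H: "finite H" "P = {x. \<forall>h\<in>H. a h \<bullet> x \<le> b h}"
    "\<forall>h\<in>H. P \<inter> {x. a h \<bullet> x = b h} facet_of P"
    by (rule full_dim_polyhedron_facet_halfspaces)
  let ?L = "P \<inter> {y. y - (y $ d) *\<^sub>R zvec d = x - (x $ d) *\<^sub>R zvec d}"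
  have "closed {y. y - (y $ d) *\<^sub>R zvec d = x - (x $ d) *\<^sub>R zvec d}"
    by (intro closed_Collect_eq continuous_intros)
  then have L: "compact ?L" "?L \<noteq> {}"
    using compact_Int_closed[OF polytope_imp_compact[OF assms(1)]] assms(3) by auto
  have "continuous_on ?L (\<lambda>y. y $ d)"
    by (intro continuous_intros)
  then obtain x' where x': "x' \<in> ?L" "\<forall>y\<in>?L. y $ d \<le> x' $ d"
    using continuous_attains_sup[OF L] by blast
  have "\<exists>h\<in>H. a h \<bullet> x' = b h \<and> a h \<bullet> zvec d > 0"
  proof (rule ccontr)
    assume no_upper: "\<not> ?thesis"
    have "\<forall>h\<in>H. a h \<bullet> x' \<le> b h"
      using x'(1) H(2) by blast
    moreover have "a h \<bullet> zvec d \<le> 0" if "h \<in> H" "a h \<bullet> x' = b h" for h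
      using no_upper that by force
    ultimately obtain e where e: "e > 0" "\<forall>h\<in>H. a h \<bullet> (x' + e *\<^sub>R zvec d) \<le> b h"
      by (rule halfspaces_feasible_direction[OF H(1)])
    then have "x' + e *\<^sub>R zvec d \<in> ?L"
      using x'(1) H(2) by (auto simp: algebra_simps)
    then have "(x' + e *\<^sub>R zvec d) $ d \<le> x' $ d"
      using x'(2) by blast
    then show False
      using e(1) by simp
  qed
  then obtain h where h: "h \<in> H" "a h \<bullet> x' = b h" "a h \<bullet> zvec d > 0"
    by blast
  let ?F = "P \<inter> {y. a h \<bullet> y = b h}"
  have "P \<subseteq> {y. a h \<bullet> y \<le> b h}"
    using H(2) h(1) by blast
  then have "top_face d P ?F"
    using facet_eq_face_by[OF _ H(3)[rule_format, OF h(1)]] assms(2) h(3) unfolding top_face_def by auto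
  moreover have "x' \<in> ?F"
    using x'(1) h(2) by blast
  moreover have "0 \<le> x' $ d - x $ d"
    using x'(2) assms(3) by simp
  moreover have "x = x' - (x' $ d - x $ d) *\<^sub>R zvec d"
  proof -
    have "x' - (x' $ d) *\<^sub>R zvec d = x - (x $ d) *\<^sub>R zvec d"
      using x'(1) by simp
    then show ?thesis
      by (simp add: algebra_simps)
  qed
  ultimately show thesis
    by (rule that)
qed

lemma finite_top_faces:
  assumes "polytope P" shows "finite {F. top_face d P F}"
proof -
  have "{F. top_face d P F} \<subseteq> {F. F face_of P}"
    using top_face_face_of[OF polytope_imp_convex[OF assms]] by blast
  then show ?thesis
    using finite_subset finite_polytope_faces[OF assms] by blast
qed

lemma grounded_top_face:
  assumes "grounded d P" "top_face d P F"
  shows "F face_of P" "\<And>y. y \<in> F \<Longrightarrow> hgt d P \<le> y $ d"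
proof -
  have P: "convex P" "compact P"
    using assms(1) polytope_imp_convex polytope_imp_compact by (auto simp: grounded_def)
  show "F face_of P"
    using top_face_face_of[OF P(1) assms(2)] .
  then show "\<And>y. y \<in> F \<Longrightarrow> hgt d P \<le> y $ d"
    using face_of_imp_subset hgt_le[OF P(2)] by blast
qed

lemma grounded_Union_columns:
  fixes P :: "(real^'n) set"
  assumes "grounded d P"
  shows "\<Union>(column d (hgt d P) ` {F. top_face d P F}) = P"
proof
  show "\<Union>(column d (hgt d P) ` {F. top_face d P F}) \<subseteq> P"
    using grounded_column_subset[OF assms] grounded_top_face(1)[OF assms] face_of_imp_subset by blast
  show "P \<subseteq> \<Union>(column d (hgt d P) ` {F. top_face d P F})"
  proof
    fix x assume "x \<in> P"
    moreover have "polytope P" "aff_dim P = int CARD('n)"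
      using assms by (simp_all add: grounded_def)
    ultimately obtain F y t where F: "top_face d P F" "y \<in> F" "0 \<le> t" "x = y - t *\<^sub>R zvec d"
      using polytope_below_top_face by blast
    have "hgt d P \<le> x $ d"
      using hgt_le \<open>x \<in> P\<close> \<open>polytope P\<close> polytope_imp_compact by blast
    then have "x \<in> column d (hgt d P) F"
      unfolding column_def using F by (intro CollectI exI[of _ y] exI[of _ t]) auto
    then show "x \<in> \<Union>(column d (hgt d P) ` {F. top_face d P F})"
      using F(1) by blast
  qed
qed

lemma grounded_PF_eq_column:
  assumes "grounded d P" "top_face d P F"
  shows "PF d P F = column d (hgt d P) F"
proof -
  have "convex P" "compact P"
    using assms(1) polytope_imp_convex polytope_imp_compact by (auto simp: grounded_def)
  then have F: "convex F" "compact F"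
    using grounded_top_face(1)[OF assms] face_of_imp_convex face_of_imp_compact by blast+
  have "hgt d P \<le> hgt d F"
    using hgt_greatest[OF top_face_nonempty[OF assms(2)]] grounded_top_face(2)[OF assms] .
  then show ?thesis
    using PF_eq_column F by blast
qed

lemma grounded_column_cell:
  assumes "grounded d P" "top_face d P F"
  shows "polytope (column d (hgt d P) F)" "column d (hgt d P) F \<noteq> {}"
proof -
  have "polytope F"
    using face_of_polytope_polytope grounded_top_face(1)[OF assms] assms(1) by (auto simp: grounded_def)
  then show "polytope (column d (hgt d P) F)"
    using polytope_column grounded_top_face(2)[OF assms] by blast
  show "column d (hgt d P) F \<noteq> {}"
    using subset_column[OF grounded_top_face(2)[OF assms]] top_face_nonempty[OF assms(2)] by blast
qed

lemma grounded_integral_column: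
  assumes "grounded d P" "integral_polytope P" "top_face d P F"
  shows "integral_polytope (column d (hgt d P) F)"
proof -
  have "P \<noteq> {}"
    using assms(1) by (auto simp: grounded_def)
  then show ?thesis
    using integral_polytope_column[OF assms(2) grounded_top_face(1)[OF assms(1,3)]
        hgt_integral[OF assms(2)] grounded_top_face(2)[OF assms(1,3)]] by blast
qed

theorem proposition3p11:
  fixes P :: "(real^'n) set" and d :: 'n
  assumes "grounded d P"
  shows "is_partition (\<Union>F\<in>{F. top_face d P F}. faces (PF d P F)) P \<and>
         (integral_polytope P \<longrightarrow>
            (\<forall>Q\<in>(\<Union>F\<in>{F. top_face d P F}. faces (PF d P F)). integral_polytope Q))"
proof -
  let ?T = "{F. top_face d P F}" and ?column = "column d (hgt d P)"
  have P: "polytope P"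
    using assms by (simp add: grounded_def)
  have cells: "polytope C \<and> C \<noteq> {}" if "C \<in> ?column ` ?T" for C
    using grounded_column_cell[OF assms] that by blast
  have "is_partition (\<Union>C\<in>?column ` ?T. faces C) P"
    using finite_top_faces[OF P] cells grounded_Union_columns[OF assms]
      top_face_column_Int_face_of[OF polytope_imp_convex[OF P]]
    by (intro is_partition_Union_faces) auto
  moreover have "integral_polytope Q"
    if "integral_polytope P" "F \<in> ?T" "Q \<in> faces (?column F)" for F Q
  proof -
    have "Q face_of ?column F"
      using that(2,3) faces_polytope grounded_column_cell[OF assms] by blast
    then show ?thesis
      using integral_polytope_face_of grounded_integral_column[OF assms that(1)] that(2) by blast
  qed
  moreover have "(\<Union>F\<in>?T. faces (PF d P F)) = (\<Union>C\<in>?column ` ?T. faces C)"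
    using grounded_PF_eq_column[OF assms] by auto
  ultimately show ?thesis
    by auto
qed

end
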